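(* Let $G$ be a finite group and $T_G = \{(g,h,gh)\mid g,h\in G\}\subseteq G^3$. Then $T_G$ admits a Mal'tsev polymorphism if and only if $G$ is abelian.
   Context: For an $n$-ary relation $R\subseteq A^n$, a $d$-ary polymorphism of $R$ is a map $f:A^d\to A$ such that whenever $d$ tuples $(x_{1,1},\dots,x_{1,n}),\dots,(x_{d,1},\dots,x_{d,n})$ lie in $R$, the tuple obtained by applying $f$ coordinatewise, $(f(x_{1,1},\dots,x_{d,1}),\dots,f(x_{1,n},\dots,x_{d,n}))$, also lies in $R$. A Mal'tsev polymorphism is a ternary polymorphism $f$ with $f(x,x,y)=f(y,x,x)=y$ for all $x,y\in A$. *)

theory Defs
  imports "HOL-Algebra.Group"
begin

text \<open>An n-ary relation on A is a set of lists of length n over A.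
  A d-ary operation on A is a function on lists (its values on lists of length d over A matter).\<close>

definition polymorphism :: "'a set \<Rightarrow> nat \<Rightarrow> 'a list set \<Rightarrow> nat \<Rightarrow> ('a list \<Rightarrow> 'a) \<Rightarrow> bool" where
  "polymorphism A n R d f \<longleftrightarrow>
     (\<forall>xs. length xs = d \<and> set xs \<subseteq> A \<longrightarrow> f xs \<in> A) \<and>
     (\<forall>rows. length rows = d \<and> (\<forall>r\<in>set rows. r \<in> R) \<longrightarrow>
        map (\<lambda>j. f (map (\<lambda>r. r ! j) rows)) [0..<n] \<in> R)"

definition maltsev_polymorphism :: "'a set \<Rightarrow> nat \<Rightarrow> 'a list set \<Rightarrow> ('a list \<Rightarrow> 'a) \<Rightarrow> bool" where
  "maltsev_polymorphism A n R f \<longleftrightarrow>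
     polymorphism A n R 3 f \<and>
     (\<forall>x\<in>A. \<forall>y\<in>A. f [x, x, y] = y \<and> f [y, x, x] = y)"

definition mult_relation :: "('a, 'b) monoid_scheme \<Rightarrow> 'a list set" where
  "mult_relation G = {[g, h, g \<otimes>\<^bsub>G\<^esub> h] | g h. g \<in> carrier G \<and> h \<in> carrier G}"

end

theory Submission
  imports Defs
begin

text \<open>If \<open>f\<close> is a Mal'tsev polymorphism of the graph of multiplication, applying it to the
  triples \<open>(g,1,g), (1,1,1), (1,h,h)\<close> and to \<open>(1,g,g), (1,1,1), (h,1,h)\<close> computes the same
  element \<open>f(g,1,h)\<close> once as \<open>gh\<close> and once as \<open>hg\<close>. Conversely, in an abelian group
  \<open>x y\<^sup>-\<^sup>1 z\<close> is a homomorphism \<open>G\<^sup>3 \<rightarrow> G\<close>, hence preserves the graph of multiplication.\<close>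

lemma mult_relation_iff:
  "[a, b, c] \<in> mult_relation G \<longleftrightarrow> a \<in> carrier G \<and> b \<in> carrier G \<and> c = a \<otimes>\<^bsub>G\<^esub> b"
  unfolding mult_relation_def by auto

lemma mult_relationE:
  assumes "r \<in> mult_relation G"
  obtains a b where "r = [a, b, a \<otimes>\<^bsub>G\<^esub> b]" "a \<in> carrier G" "b \<in> carrier G"
  using assms unfolding mult_relation_def by auto

lemma polymorphism_ternary_ternary_iff:
  assumes "\<forall>r\<in>R. length r = 3"
  shows "polymorphism A 3 R 3 f \<longleftrightarrow>
    (\<forall>x\<in>A. \<forall>y\<in>A. \<forall>z\<in>A. f [x, y, z] \<in> A) \<and>
    (\<forall>a1 b1 c1 a2 b2 c2 a3 b3 c3. [a1, b1, c1] \<in> R \<longrightarrow> [a2, b2, c2] \<in> R \<longrightarrow> [a3, b3, c3] \<in> R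
       \<longrightarrow> [f [a1, a2, a3], f [b1, b2, b3], f [c1, c2, c3]] \<in> R)"
proof -
  have upt3: "[0..<3] = [0::nat, 1, 2]"
    by (simp add: upt_rec)
  have length3: "length xs = 3 \<longleftrightarrow> (\<exists>x y z. xs = [x, y, z])" for xs :: "'b list"
    by (auto simp: numeral_3_eq_3 length_Suc_conv)
  have triple: "r \<in> R \<Longrightarrow> \<exists>a b c. r = [a, b, c]" for r
    using assms length3 by blast
  show ?thesis
    unfolding polymorphism_def length3
  proof (intro iffI conjI allI impI; elim conjE exE)
    fix rows r1 r2 r3
    assume "rows = [r1, r2, r3]" "\<forall>r\<in>set rows. r \<in> R"
      and preserves: "\<forall>a1 b1 c1 a2 b2 c2 a3 b3 c3. [a1, b1, c1] \<in> R \<longrightarrow> [a2, b2, c2] \<in> R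
        \<longrightarrow> [a3, b3, c3] \<in> R \<longrightarrow> [f [a1, a2, a3], f [b1, b2, b3], f [c1, c2, c3]] \<in> R"
    moreover from this obtain a1 b1 c1 a2 b2 c2 a3 b3 c3
      where "r1 = [a1, b1, c1]" "r2 = [a2, b2, c2]" "r3 = [a3, b3, c3]"
      using triple by (metis list.set_intros)
    ultimately show "map (\<lambda>j. f (map (\<lambda>r. r ! j) rows)) [0..<3] \<in> R"
      by (simp add: upt3)
  next
    fix a1 b1 c1 a2 b2 c2 a3 b3 c3
    assume "\<forall>rows. (\<exists>x y z. rows = [x, y, z]) \<and> (\<forall>r\<in>set rows. r \<in> R)
        \<longrightarrow> map (\<lambda>j. f (map (\<lambda>r. r ! j) rows)) [0..<3] \<in> R"
      and "[a1, b1, c1] \<in> R" "[a2, b2, c2] \<in> R" "[a3, b3, c3] \<in> R"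
    then show "[f [a1, a2, a3], f [b1, b2, b3], f [c1, c2, c3]] \<in> R"
      by (auto simp: upt3 dest: spec[of _ "[[a1, b1, c1], [a2, b2, c2], [a3, b3, c3]]"])
  qed auto
qed

lemma maltsev_mult_relation_iff:
  "maltsev_polymorphism (carrier G) 3 (mult_relation G) f \<longleftrightarrow>
    (\<forall>x\<in>carrier G. \<forall>y\<in>carrier G. \<forall>z\<in>carrier G. f [x, y, z] \<in> carrier G) \<and>
    (\<forall>a1\<in>carrier G. \<forall>b1\<in>carrier G. \<forall>a2\<in>carrier G. \<forall>b2\<in>carrier G. \<forall>a3\<in>carrier G. \<forall>b3\<in>carrier G.
       f [a1 \<otimes>\<^bsub>G\<^esub> b1, a2 \<otimes>\<^bsub>G\<^esub> b2, a3 \<otimes>\<^bsub>G\<^esub> b3] = f [a1, a2, a3] \<otimes>\<^bsub>G\<^esub> f [b1, b2, b3]) \<and>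
    (\<forall>x\<in>carrier G. \<forall>y\<in>carrier G. f [x, x, y] = y \<and> f [y, x, x] = y)"
proof -
  have triples: "\<forall>r\<in>mult_relation G. length r = 3"
    by (auto elim: mult_relationE)
  show ?thesis
    unfolding maltsev_polymorphism_def polymorphism_ternary_ternary_iff[OF triples]
    by (auto simp: mult_relation_iff)
qed

lemma (in group) maltsev_mult_relation_imp_comm_group:
  assumes "maltsev_polymorphism (carrier G) 3 (mult_relation G) f"
  shows "comm_group G"
proof (rule group_comm_groupI)
  fix g h
  assume g: "g \<in> carrier G" and h: "h \<in> carrier G"
  note f = assms[unfolded maltsev_mult_relation_iff]
  have "f [g \<otimes> \<one>, \<one> \<otimes> \<one>, \<one> \<otimes> h] = f [g, \<one>, \<one>] \<otimes> f [\<one>, \<one>, h]"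
    using f g h by blast
  then have gh: "f [g, \<one>, h] = g \<otimes> h"
    using f g h by simp
  have "f [\<one> \<otimes> g, \<one> \<otimes> \<one>, h \<otimes> \<one>] = f [\<one>, \<one>, h] \<otimes> f [g, \<one>, \<one>]"
    using f g h by blast
  then have hg: "f [g, \<one>, h] = h \<otimes> g"
    using f g h by simp
  show "g \<otimes> h = h \<otimes> g"
    using gh hg by simp
qed

lemma (in comm_group) maltsev_mult_relation:
  "maltsev_polymorphism (carrier G) 3 (mult_relation G) (\<lambda>xs. xs ! 0 \<otimes> inv (xs ! 1) \<otimes> xs ! 2)"
  unfolding maltsev_mult_relation_iff
proof (intro conjI ballI)
  fix x y
  assume "x \<in> carrier G" "y \<in> carrier G"
  then show "[x, x, y] ! 0 \<otimes> inv ([x, x, y] ! 1) \<otimes> [x, x, y] ! 2 = y"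
    and "[y, x, x] ! 0 \<otimes> inv ([y, x, x] ! 1) \<otimes> [y, x, x] ! 2 = y"
    by (simp_all add: m_assoc)
qed (auto simp: inv_mult m_ac)

theorem lemma2p3:
  fixes G :: "('a, 'b) monoid_scheme"
  assumes "group G" and "finite (carrier G)"
  shows "(\<exists>f. maltsev_polymorphism (carrier G) 3 (mult_relation G) f) \<longleftrightarrow> comm_group G"
  using group.maltsev_mult_relation_imp_comm_group[OF \<open>group G\<close>] comm_group.maltsev_mult_relation
  by blast

end
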